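(* Let $\mathscr P=(P,G_P)$ and $\mathscr Q=(Q,G_Q)$ be causal graphical models over $\mathbf X=(X_1,\dots,X_d)$ such that $G_P$ and $G_Q$ have the same skeleton, and let $X_i\to X_j$ be an edge of $G_Q$ such that $X_j\to X_i$ is an edge of $G_P$ (a flipped edge). Let $P^e$ be an interventional distribution generated from $\mathscr P$ with target set $\mathcal I_e$. (i) If there exists an unblocked path $e\overset{G_P}{\to}X_i$ given $\mathbf{PA}_j^{G_Q}\setminus\{X_i\}$, then $P^e(X_j\mid\mathbf{PA}_j^{G_Q})\neq P(X_j\mid\mathbf{PA}_j^{G_Q})$. (ii) If there exists an unblocked path $e\overset{G_P}{\to}X_j$ given $\mathbf{PA}_i^{G_Q}$, then $P^e(X_i\mid\mathbf{PA}_i^{G_Q})\neq P(X_i\mid\mathbf{PA}_i^{G_Q})$.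
   Context: All distributions have densities with respect to Lebesgue measure; $[d]=\{1,\dots,d\}$. A causal graphical model (CGM) is a pair $(P,G)$ of a distribution over $\mathbf X$ and a DAG on $[d]$ with $P$ Markovian w.r.t. $G$ ($P(\mathbf X)=\prod_iP(X_i\mid\mathbf{PA}_i^G)$, $\mathbf{PA}_i^G$ = parents of $X_i$ in $G$). Interventional distributions: environment $e$ has target set $\mathcal I_e\subseteq[d]$ and $P^e(\mathbf X)=\prod_{i\in\mathcal I_e}\tilde P(X_i\mid\mathbf{PA}_i^{G_P})\prod_{i\notin\mathcal I_e}P(X_i\mid\mathbf{PA}_i^{G_P})$, with $P^e(X_i\mid\mathbf{PA}_i^{G_P})=P(X_i\mid\mathbf{PA}_i^{G_P})$ iff $i\notin\mathcal I_e$; mechanisms are independent causal mechanisms and pseudo causal sufficiency holds (unobserved confounders are fixed within each environment). Standing faithfulness assumption: $P$ is faithful to $G_P$, and the multi-environment distribution is faithful to the augmented DAG obtained from $G_P$ by adding an environment node $e$ with edges $e\to X_k$ for all $k\in\mathcal I_e$, so that $P^e(X\mid\mathbf Z)\ne P(X\mid\mathbf Z)$ whenever $e$ and $X$ are d-connected given $\mathbf Z$ in that augmented DAG. Unblocked path: for a DAG $G$ over $\mathbf X$ and $\mathbf Z\subseteq\mathbf X$, there is a (directed) unblocked path $e\overset{G}{\to}X_i$ given $\mathbf Z$ if there exist $k\in\mathcal I_e$ and a directed path $X_k\to\cdots\to X_i$ in $G$ none of whose vertices lies in $\mathbf Z$; if $k=i$ this condition is trivially satisfied. *)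

theory Defs
  imports "HOL-Analysis.Analysis"
begin

text \<open>Variables X_1..X_d are indexed by 1..d; a point is x :: nat => real
 (extensional on {1..d}); the reference measure is the product Lebesgue measure.\<close>

abbreviation prodM :: "nat set \<Rightarrow> (nat \<Rightarrow> real) measure" where
  "prodM S \<equiv> PiM S (\<lambda>_. lborel)"

definition is_density :: "nat \<Rightarrow> ((nat \<Rightarrow> real) \<Rightarrow> real) \<Rightarrow> bool" where
  "is_density d p \<longleftrightarrow> p \<in> borel_measurable (prodM {1..d}) \<and> (\<forall>x. 0 \<le> p x)
     \<and> (\<integral>\<^sup>+ x. ennreal (p x) \<partial>prodM {1..d}) = 1"

definition marg :: "nat \<Rightarrow> ((nat \<Rightarrow> real) \<Rightarrow> real) \<Rightarrow> nat set \<Rightarrow> (nat \<Rightarrow> real) \<Rightarrow> real" where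
  "marg d p S x = enn2real (\<integral>\<^sup>+ y. ennreal (p (merge S ({1..d} - S) (x, y))) \<partial>prodM ({1..d} - S))"

text \<open>Conditional density of X_i given X_S (with the convention t/0 = 0).\<close>
definition cond :: "nat \<Rightarrow> ((nat \<Rightarrow> real) \<Rightarrow> real) \<Rightarrow> nat \<Rightarrow> nat set \<Rightarrow> (nat \<Rightarrow> real) \<Rightarrow> real" where
  "cond d p i S x = marg d p (insert i S) x / marg d p S x"

text \<open>Equality of conditional distributions P(X_i | X_S) = Q(X_i | X_S):
 the conditional densities agree almost everywhere.\<close>
definition cond_eq :: "nat \<Rightarrow> ((nat \<Rightarrow> real) \<Rightarrow> real) \<Rightarrow> ((nat \<Rightarrow> real) \<Rightarrow> real) \<Rightarrow> nat \<Rightarrow> nat set \<Rightarrow> bool" where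
  "cond_eq d p q i S \<longleftrightarrow> (AE x in prodM (insert i S). cond d p i S x = cond d q i S x)"

text \<open>DAGs on [d] as edge relations; (a,b) in G means a -> b.\<close>
definition dag :: "nat \<Rightarrow> (nat \<times> nat) set \<Rightarrow> bool" where
  "dag d G \<longleftrightarrow> G \<subseteq> {1..d} \<times> {1..d} \<and> acyclic G"

definition pa :: "(nat \<times> nat) set \<Rightarrow> nat \<Rightarrow> nat set" where
  "pa G i = {k. (k, i) \<in> G}"

definition skeleton :: "(nat \<times> nat) set \<Rightarrow> (nat \<times> nat) set" where
  "skeleton G = G \<union> G\<inverse>"

definition cgm :: "nat \<Rightarrow> ((nat \<Rightarrow> real) \<Rightarrow> real) \<Rightarrow> (nat \<times> nat) set \<Rightarrow> bool" where
  "cgm d p G \<longleftrightarrow> dag d G \<and> is_density d p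
     \<and> (AE x in prodM {1..d}. p x = (\<Prod>i\<in>{1..d}. cond d p i (pa G i) x))"

definition interventional :: "nat \<Rightarrow> ((nat \<Rightarrow> real) \<Rightarrow> real) \<Rightarrow> (nat \<times> nat) set \<Rightarrow> nat set
     \<Rightarrow> ((nat \<Rightarrow> real) \<Rightarrow> real) \<Rightarrow> bool" where
  "interventional d p G I pe \<longleftrightarrow> I \<subseteq> {1..d} \<and> is_density d pe
     \<and> (AE x in prodM {1..d}. pe x = (\<Prod>i\<in>I. cond d pe i (pa G i) x)
                                     * (\<Prod>i\<in>{1..d} - I. cond d p i (pa G i) x))
     \<and> (\<forall>i\<in>{1..d}. cond_eq d pe p i (pa G i) \<longleftrightarrow> i \<notin> I)"

text \<open>Augmented DAG: environment node e is node 0, with edges e -> X_k for k in I.\<close>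
definition augment :: "(nat \<times> nat) set \<Rightarrow> nat set \<Rightarrow> (nat \<times> nat) set" where
  "augment G I = G \<union> {(0, k) | k. k \<in> I}"

definition collider :: "(nat \<times> nat) set \<Rightarrow> nat \<Rightarrow> nat \<Rightarrow> nat \<Rightarrow> bool" where
  "collider G u v w \<longleftrightarrow> (u, v) \<in> G \<and> (w, v) \<in> G"

definition d_connected :: "(nat \<times> nat) set \<Rightarrow> nat \<Rightarrow> nat \<Rightarrow> nat set \<Rightarrow> bool" where
  "d_connected G a b Z \<longleftrightarrow> (\<exists>ps. ps \<noteq> [] \<and> hd ps = a \<and> last ps = b \<and> distinct ps
     \<and> (\<forall>m. Suc m < length ps \<longrightarrow> (ps!m, ps!Suc m) \<in> G \<or> (ps!Suc m, ps!m) \<in> G)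
     \<and> (\<forall>m. 0 < m \<and> Suc m < length ps \<longrightarrow>
          (if collider G (ps!(m-1)) (ps!m) (ps!Suc m)
           then (\<exists>w\<in>Z. (ps!m, w) \<in> G\<^sup>*) else ps!m \<notin> Z)))"

definition unblocked :: "(nat \<times> nat) set \<Rightarrow> nat set \<Rightarrow> nat \<Rightarrow> nat set \<Rightarrow> bool" where
  "unblocked G I i Z \<longleftrightarrow> (\<exists>k\<in>I. k = i \<or> (\<exists>ps. ps \<noteq> [] \<and> hd ps = k \<and> last ps = i
     \<and> (\<forall>m. Suc m < length ps \<longrightarrow> (ps!m, ps!Suc m) \<in> G) \<and> (\<forall>v\<in>set ps. v \<notin> Z)))"

text \<open>Multi-environment faithfulness (standing assumption): d-connection of e and X
 given Z in the augmented DAG implies P^e(X | Z) differs from P(X | Z).\<close>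
definition env_faithful :: "nat \<Rightarrow> ((nat \<Rightarrow> real) \<Rightarrow> real) \<Rightarrow> (nat \<times> nat) set \<Rightarrow> nat set
     \<Rightarrow> ((nat \<Rightarrow> real) \<Rightarrow> real) \<Rightarrow> bool" where
  "env_faithful d p G I pe \<longleftrightarrow> (\<forall>X\<in>{1..d}. \<forall>Z. Z \<subseteq> {1..d} - {X} \<longrightarrow>
     d_connected (augment G I) 0 X Z \<longrightarrow> \<not> cond_eq d pe p X Z)"

end

theory Submission
  imports Defs
begin

text \<open>By faithfulness to the augmented DAG it suffices to d-connect the environment node e
  with the target variable given its G_Q-parents. In (ii) the unblocked directed path
  e \<rightarrow> \<dots> \<rightarrow> X_j is extended by the edge X_j \<rightarrow> X_i of G_P; its interior avoids PA_i^Q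
  (X_j itself is not a G_Q-parent of X_i, because X_i \<rightarrow> X_j in G_Q). In (i) the directed
  path towards X_i is cut where it first meets X_i or X_j: if at X_j, it is open given PA_j^Q;
  if at X_i, the flipped edge X_i \<leftarrow> X_j is appended and X_i becomes a collider, which is open
  because X_i \<in> PA_j^Q. Directed segments contain no colliders since the augmented graph is
  acyclic.\<close>

abbreviation directed_walk :: "('a \<times> 'a) set \<Rightarrow> 'a list \<Rightarrow> bool" where
  "directed_walk G ps \<equiv> successively (\<lambda>a b. (a, b) \<in> G) ps"

lemma successively_distinct_shortcut:
  assumes "successively P ps" "ps \<noteq> []"
  obtains qs where "successively P qs" "distinct qs" "qs \<noteq> []"
    "hd qs = hd ps" "last qs = last ps" "set qs \<subseteq> set ps"
  using assms
proof (induction "length ps" arbitrary: ps rule: less_induct)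
  case less
  show ?case
  proof (cases "distinct ps")
    case True
    then show ?thesis using less.prems by blast
  next
    case False
    then obtain xs ys zs y where ps: "ps = xs @ [y] @ ys @ [y] @ zs"
      using not_distinct_decomp by blast
    let ?ps' = "xs @ [y] @ zs"
    have "successively P ?ps'"
      using less.prems(2) unfolding ps by (auto simp: successively_append_iff successively_Cons)
    moreover have "hd ?ps' = hd ps" "last ?ps' = last ps" "set ?ps' \<subseteq> set ps"
      by (auto simp: ps hd_append last_append)
    ultimately show ?thesis
      using less.hyps[of ?ps'] less.prems(1) by (force simp: ps)
  qed
qed

lemma acyclic_reverse_edge: "acyclic G \<Longrightarrow> (a, b) \<in> G \<Longrightarrow> (b, a) \<notin> G"
  by (meson acyclic_def trancl.r_into_trancl trancl_into_trancl)

lemma acyclic_augment: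
  assumes "acyclic G" "0 \<notin> Range G" "0 \<notin> I"
  shows "acyclic (augment G I)"
proof -
  have "y \<noteq> 0 \<and> (x = 0 \<or> (x, y) \<in> G\<^sup>+)" if "(x, y) \<in> (augment G I)\<^sup>+" for x y
    using that
  proof (induction rule: trancl_induct)
    case (base y)
    then show ?case using assms(2,3) by (auto simp: augment_def)
  next
    case (step y z)
    then show ?case using assms(2,3) by (auto simp: augment_def intro: trancl_into_trancl)
  qed
  then show ?thesis using assms(1) by (auto simp: acyclic_def)
qed

definition d_connecting :: "(nat \<times> nat) set \<Rightarrow> nat set \<Rightarrow> nat list \<Rightarrow> bool" where
  "d_connecting G Z ps \<longleftrightarrow> distinct ps
     \<and> (\<forall>m. Suc m < length ps \<longrightarrow> (ps!m, ps!Suc m) \<in> G \<or> (ps!Suc m, ps!m) \<in> G)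
     \<and> (\<forall>m. 0 < m \<and> Suc m < length ps \<longrightarrow>
          (if collider G (ps!(m-1)) (ps!m) (ps!Suc m)
           then (\<exists>w\<in>Z. (ps!m, w) \<in> G\<^sup>*) else ps!m \<notin> Z))"

lemma d_connected_iff_d_connecting:
  "d_connected G a b Z \<longleftrightarrow> (\<exists>ps. ps \<noteq> [] \<and> hd ps = a \<and> last ps = b \<and> d_connecting G Z ps)"
  unfolding d_connected_def d_connecting_def by blast

lemma d_connecting_snoc:
  assumes ps: "d_connecting G Z (ps @ [v])"
    and w: "w \<notin> set (ps @ [v])" "(v, w) \<in> G \<or> (w, v) \<in> G"
    and blocking: "ps \<noteq> [] \<Longrightarrow>
      (if collider G (last ps) v w then \<exists>z\<in>Z. (v, z) \<in> G\<^sup>* else v \<notin> Z)"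
  shows "d_connecting G Z (ps @ [v, w])"
proof -
  let ?qs = "ps @ [v, w]"
  have old: "?qs ! m = (ps @ [v]) ! m" if "m < Suc (length ps)" for m
    using that by (simp add: nth_append)
  have new: "?qs ! length ps = v" "?qs ! Suc (length ps) = w"
    by (simp_all add: nth_append)
  have prev: "?qs ! (length ps - 1) = last ps" if "ps \<noteq> []"
    using that by (simp add: nth_append last_conv_nth)
  show ?thesis
    unfolding d_connecting_def
  proof (intro conjI allI impI)
    show "distinct ?qs" using ps w(1) by (simp add: d_connecting_def)
  next
    fix m assume m: "Suc m < length ?qs"
    show "(?qs!m, ?qs!Suc m) \<in> G \<or> (?qs!Suc m, ?qs!m) \<in> G"
    proof (cases "Suc m < Suc (length ps)")
      case True
      then show ?thesis using ps old[of m] old[of "Suc m"] by (simp add: d_connecting_def)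
    next
      case False
      then have "m = length ps" using m by simp
      then show ?thesis using new w(2) by simp
    qed
  next
    fix m assume m: "0 < m \<and> Suc m < length ?qs"
    show "if collider G (?qs!(m-1)) (?qs!m) (?qs!Suc m)
          then \<exists>z\<in>Z. (?qs!m, z) \<in> G\<^sup>* else ?qs!m \<notin> Z"
    proof (cases "Suc m < Suc (length ps)")
      case True
      then show ?thesis using ps m old[of m] old[of "Suc m"] old[of "m - 1"]
        by (simp add: d_connecting_def)
    next
      case False
      then have "m = length ps" "ps \<noteq> []" using m by auto
      then show ?thesis using new prev blocking by simp
    qed
  qed
qed

lemma d_connecting_directed_path:
  assumes "acyclic G" "directed_walk G ps" "distinct ps" "set ps \<inter> Z \<subseteq> {hd ps, last ps}"
  shows "d_connecting G Z ps"
  using assms(2-)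
proof (induction ps rule: rev_induct)
  case Nil
  show ?case by (simp add: d_connecting_def)
next
  case (snoc w qs)
  show ?case
  proof (cases qs rule: rev_cases)
    case Nil
    then show ?thesis by (simp add: d_connecting_def)
  next
    case (snoc ps v)
    have edge: "(v, w) \<in> G" and walk: "directed_walk G (ps @ [v])"
      using snoc.prems(1) by (simp_all add: \<open>qs = ps @ [v]\<close> successively_append_iff)
    have "hd (ps @ [v, w]) = hd (ps @ [v])" by (cases ps) simp_all
    then have "d_connecting G Z (ps @ [v])"
      using snoc.IH walk snoc.prems(2,3) by (auto simp: \<open>qs = ps @ [v]\<close>)
    moreover have "ps \<noteq> [] \<Longrightarrow> \<not> collider G (last ps) v w"
      using edge assms(1) by (auto simp: collider_def dest: acyclic_reverse_edge)
    moreover have "ps \<noteq> [] \<Longrightarrow> v \<notin> Z"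
      using snoc.prems(2,3) by (cases ps) (auto simp: \<open>qs = ps @ [v]\<close>)
    ultimately show ?thesis
      using edge snoc.prems(2) by (auto simp: \<open>qs = ps @ [v]\<close> intro!: d_connecting_snoc)
  qed
qed

lemma d_connected_directed_walk:
  assumes "acyclic G" "directed_walk G ps" "ps \<noteq> []" "set ps \<inter> Z \<subseteq> {hd ps, last ps}"
  shows "d_connected G (hd ps) (last ps) Z"
proof -
  obtain qs where qs: "directed_walk G qs" "distinct qs" "qs \<noteq> []"
    "hd qs = hd ps" "last qs = last ps" "set qs \<subseteq> set ps"
    using successively_distinct_shortcut[OF assms(2,3)] .
  have "set qs \<inter> Z \<subseteq> {hd qs, last qs}"
    using qs(4-6) assms(4) by auto
  then have "d_connecting G Z qs"
    using d_connecting_directed_path[OF assms(1) qs(1,2)] by blast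
  then show ?thesis using qs(3-5) by (auto simp: d_connected_iff_d_connecting)
qed

lemma d_connected_collider_walk:
  assumes "acyclic G" "directed_walk G ps" "ps \<noteq> []" "set ps \<inter> Z \<subseteq> {hd ps, last ps}"
    and "last ps \<in> Z" "(w, last ps) \<in> G" "w \<notin> set ps"
  shows "d_connected G (hd ps) w Z"
proof -
  obtain qs where qs: "directed_walk G qs" "distinct qs" "qs \<noteq> []"
    "hd qs = hd ps" "last qs = last ps" "set qs \<subseteq> set ps"
    using successively_distinct_shortcut[OF assms(2,3)] .
  obtain rs where rs: "qs = rs @ [last ps]"
    using qs(3,5) by (metis append_butlast_last_id)
  have "set qs \<inter> Z \<subseteq> {hd qs, last qs}"
    using qs(4-6) assms(4) by auto
  then have "d_connecting G Z qs"
    using d_connecting_directed_path[OF assms(1) qs(1,2)] by blast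
  moreover have "rs \<noteq> [] \<Longrightarrow> collider G (last rs) (last ps) w"
    using qs(1) assms(6) by (simp add: rs collider_def successively_append_iff)
  ultimately have "d_connecting G Z (rs @ [last ps, w])"
    using assms(5-7) qs(6) by (intro d_connecting_snoc) (auto simp: rs)
  moreover have "hd (rs @ [last ps, w]) = hd ps"
    using qs(4) by (cases rs) (simp_all add: rs)
  ultimately show ?thesis
    unfolding d_connected_iff_d_connecting by (intro exI[of _ "rs @ [last ps, w]"]) simp
qed

lemma unblocked_augment_walk:
  assumes "unblocked G I t Z" "t \<notin> Z"
  obtains ps where "directed_walk (augment G I) (0 # ps @ [t])" "set (ps @ [t]) \<inter> Z = {}"
proof -
  obtain k where k: "k \<in> I" and "k = t \<or> (\<exists>qs. qs \<noteq> [] \<and> hd qs = k \<and> last qs = t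
      \<and> directed_walk G qs \<and> set qs \<inter> Z = {})"
    using assms(1) unfolding unblocked_def successively_conv_nth by blast
  then consider "k = t"
    | qs where "qs \<noteq> []" "hd qs = k" "last qs = t" "directed_walk G qs" "set qs \<inter> Z = {}"
    by blast
  then show ?thesis
  proof cases
    case 1
    then show ?thesis using that[of "[]"] k assms(2) by (simp add: augment_def)
  next
    case (2 qs)
    have "directed_walk (augment G I) qs"
      using \<open>directed_walk G qs\<close> by (rule successively_mono) (simp add: augment_def)
    then have "directed_walk (augment G I) (0 # qs)"
      using 2(1,2) k by (simp add: successively_Cons augment_def)
    moreover have "qs = butlast qs @ [t]"
      using 2(1,3) by (metis append_butlast_last_id)
    ultimately show ?thesis
      using that[of "butlast qs"] 2(5) by metis
  qed
qed

lemma unblocked_edge_d_connected: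
  assumes "acyclic G" "0 \<notin> Range G" "0 \<notin> I"
    and "(j, i) \<in> G" "unblocked G I j Z" "j \<notin> Z"
  shows "d_connected (augment G I) 0 i Z"
proof -
  obtain ps where ps: "directed_walk (augment G I) (0 # ps @ [j])" "set (ps @ [j]) \<inter> Z = {}"
    using unblocked_augment_walk[OF assms(5,6)] .
  have "directed_walk (augment G I) ((0 # ps @ [j]) @ [i])"
    using ps(1) assms(4) unfolding successively_append_iff[of _ "0 # ps @ [j]"]
    by (simp add: augment_def)
  moreover have "set ((0 # ps @ [j]) @ [i]) \<inter> Z \<subseteq> {0, i}"
    using ps(2) by auto
  ultimately show ?thesis
    using d_connected_directed_walk[OF acyclic_augment[OF assms(1-3)]] by fastforce
qed

lemma unblocked_collider_d_connected:
  assumes "acyclic G" "0 \<notin> Field G" "0 \<notin> I"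
    and "(j, i) \<in> G" "unblocked G I i (Z - {i})" "i \<in> Z"
  shows "d_connected (augment G I) 0 j Z"
proof -
  have acyclic: "acyclic (augment G I)"
    using acyclic_augment assms(1-3) by (simp add: Field_def)
  obtain ps where ps:
      "directed_walk (augment G I) (0 # ps @ [i])" "set (ps @ [i]) \<inter> (Z - {i}) = {}"
    using unblocked_augment_walk[OF assms(5)] by blast
  have "\<exists>x \<in> set (0 # ps @ [i]). x \<in> {i, j}" by simp
  then obtain ys x zs where split:
      "0 # ps @ [i] = ys @ x # zs" "x \<in> {i, j}" "\<forall>y \<in> set ys. y \<notin> {i, j}"
    by (rule split_list_first_propE)
  have "0 \<notin> {i, j}" using assms(2,4) by (auto simp: Field_def)
  then have "ys \<noteq> []" using split by (cases ys) auto
  then have hd: "hd (ys @ [x]) = 0" using split(1) by (cases ys) auto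
  have walk: "directed_walk (augment G I) (ys @ [x])"
    using ps(1) unfolding split(1) by (simp add: successively_append_iff successively_Cons)
  have "set ys \<subseteq> set (0 # ps @ [i])"
    unfolding split(1) by auto
  then have avoid: "set (ys @ [x]) \<inter> Z \<subseteq> {hd (ys @ [x]), last (ys @ [x])}"
    using ps(2) split(3) hd by auto
  from split(2) consider "x = i" | "x = j" by blast
  then show ?thesis
  proof cases
    case 1
    moreover have "j \<noteq> i"
      using acyclic_reverse_edge[OF assms(1,4)] assms(4) by blast
    ultimately show ?thesis
      using d_connected_collider_walk[OF acyclic walk _ avoid, of j] hd split(3) assms(4,6)
      by (auto simp: augment_def)
  next
    case 2
    then show ?thesis
      using d_connected_directed_walk[OF acyclic walk _ avoid] hd by simp
  qed
qed

lemma pa_subset: "dag d G \<Longrightarrow> pa G x \<subseteq> {1..d} - {x}"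
  unfolding dag_def pa_def using acyclic_reverse_edge[of G x x] by blast

theorem lemma18:
  fixes d :: nat and p q pe :: "(nat \<Rightarrow> real) \<Rightarrow> real"
    and GP GQ :: "(nat \<times> nat) set" and I :: "nat set" and i j :: nat
  assumes "cgm d p GP" and "cgm d q GQ"
    and "skeleton GP = skeleton GQ"
    and "(i, j) \<in> GQ" and "(j, i) \<in> GP"
    and "interventional d p GP I pe"
    and "env_faithful d p GP I pe"
  shows "(unblocked GP I i (pa GQ j - {i}) \<longrightarrow> \<not> cond_eq d pe p j (pa GQ j))
       \<and> (unblocked GP I j (pa GQ i) \<longrightarrow> \<not> cond_eq d pe p i (pa GQ i))"
proof -
  have GP: "dag d GP" and GQ: "dag d GQ"
    using assms(1,2) by (simp_all add: cgm_def)
  then have "acyclic GP" "0 \<notin> Field GP"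
    by (auto simp: dag_def Field_def)
  moreover have "0 \<notin> I"
    using assms(6) by (auto simp: interventional_def)
  moreover have "i \<in> pa GQ j" "j \<notin> pa GQ i"
    using assms(4) acyclic_reverse_edge[OF _ assms(4)] GQ by (auto simp: pa_def dag_def)
  moreover have "\<not> cond_eq d pe p x (pa GQ x)"
    if "x \<in> {1..d}" "d_connected (augment GP I) 0 x (pa GQ x)" for x
    using assms(7) that pa_subset[OF GQ] unfolding env_faithful_def by blast
  moreover have "i \<in> {1..d}" "j \<in> {1..d}"
    using GP assms(5) by (auto simp: dag_def)
  ultimately show ?thesis
    using unblocked_collider_d_connected[of GP I j i "pa GQ j"]
      unblocked_edge_d_connected[of GP I j i "pa GQ i"] assms(5)
    by (auto simp: Field_def)
qed

end
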